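(* Let $q,r,\mu,\nu$ be positive integers with $q+1\le\nu\le q+r-1$. Then: (i) $\mathcal{N}^k(z)\bar{\mathcal{K}}^i(z)=0$ for all integers $i\ge k\ge0$; (ii) if $\mu\le r-1$, $\bar{\mathcal{K}}^{\mu-1}(z)$ has size $\nu r\times(\nu r-q\mu)$ and full column rank $\nu r-q\mu$, and if $\mu\ge r$, $\bar{\mathcal{K}}^{\mu-1}(z)$ has size $\nu r\times(\nu-q)r$ and full column rank $(\nu-q)r$; (iii) the kernel of $\mathcal{N}(z)$ has dimension $\nu r-q\min\{\mu,r\}$ and is spanned by the columns of $\bar{\mathcal{K}}^{\mu-1}(z)$; the rank of $\mathcal{N}(z)$ equals $q\min\{\mu,r\}<\nu r$, so $\mathcal{N}(z)$ never has full column rank.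
   Context: Matrix indices start at $0$; $'$ and $^{(j)}$ denote $z$-derivatives. $u(z)=(1,\dots,z^{q-1})^\top$, $w(z)=(1,\dots,z^{r-1})$, $M(z)=u(z)w(z)$. For $k\ge0$, $\mathcal{N}^k(z)=\frac{1}{k!}\big(\frac{1}{0!}M^{(k)}(z),\frac{1}{1!}M^{(k+1)}(z),\dots,\frac{1}{(\nu-1)!}M^{(k+\nu-1)}(z)\big)\in\mathbb{C}^{q\times\nu r}$, and $\mathcal{N}(z)\in\mathbb{C}^{\mu q\times\nu r}$ is the matrix with block rows $\mathcal{N}^0(z),\dots,\mathcal{N}^{\mu-1}(z)$. $S_n$ is the $n\times n$ shift matrix $(S_n)_{ij}=\delta_{i+1,j}$; $\ell_q$ is the last standard basis vector of $\mathbb{R}^q$, $\varphi$ the first standard basis vector of $\mathbb{R}^{\nu-q}$. $G(z)\in\mathbb{C}^{r\times r}$ has entries $G_{ij}=z^{j-i-1}$ for $j>i$, $0$ otherwise; for $0\le j\le r-1$, $G_{j0}(z)$ is the $(r-j)\times r$ matrix formed by the first $r-j$ rows of $G(z)$. For $0\le j\le r-2$, $F_j(z)\in\mathbb{C}^{(r-j)\times(r-j-1)}$ has entries $(F_j)_{ii}=-z$, $(F_j)_{i+1,i}=1$, zero otherwise. Define \[ \bar K_j(z)=\begin{pmatrix} I_q\otimes F_j(z)+S_q\otimes F_j'(z) & -(\ell_q\varphi^\top)\otimes \frac{1}{j!}G_{j0}^{(j)}(z)\\ 0 & I_{\nu-q}\otimes I_r-S_{\nu-q}\otimes G(z)\end{pmatrix}\in\mathbb{C}^{(\nu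 r-qj)\times(\nu r-q(j+1))}\quad(0\le j\le r-2), \] $\bar K_{r-1}(z)=\begin{pmatrix}0_{q\times(\nu-q)r}\\ I_{\nu-q}\otimes I_r-S_{\nu-q}\otimes G(z)\end{pmatrix}\in\mathbb{C}^{(\nu r-q(r-1))\times(\nu-q)r}$, and $\bar K_j(z)=I_{\nu-q}\otimes I_r-S_{\nu-q}\otimes G(z)$ for $j\ge r$. Finally $\bar{\mathcal{K}}^i(z)=\bar K_0(z)\bar K_1(z)\cdots\bar K_i(z)$. *)

theory Defs
  imports "HOL-Analysis.Derivative" "Jordan_Normal_Form.DL_Rank" "Jordan_Normal_Form.Matrix_Kernel"
begin

definition mat_deriv :: "nat \<Rightarrow> (complex \<Rightarrow> complex mat) \<Rightarrow> complex \<Rightarrow> complex mat" where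
  "mat_deriv k A z = mat (dim_row (A z)) (dim_col (A z))
      (\<lambda>(i,j). (deriv ^^ k) (\<lambda>w. A w $$ (i,j)) z)"

definition kron :: "complex mat \<Rightarrow> complex mat \<Rightarrow> complex mat" where
  "kron A B = mat (dim_row A * dim_row B) (dim_col A * dim_col B)
      (\<lambda>(i,j). A $$ (i div dim_row B, j div dim_col B) * B $$ (i mod dim_row B, j mod dim_col B))"

definition Mmat :: "nat \<Rightarrow> nat \<Rightarrow> complex \<Rightarrow> complex mat" where
  "Mmat q r z = mat q 1 (\<lambda>(i,_). z ^ i) * mat 1 r (\<lambda>(_,j). z ^ j)"

(* N^k(z) in C^{q x nu r}: block column l is (1/k!)(1/l!) M^{(k+l)}(z) *)
definition Nblk :: "nat \<Rightarrow> nat \<Rightarrow> nat \<Rightarrow> nat \<Rightarrow> complex \<Rightarrow> complex mat" where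
  "Nblk q r nu k z = mat q (nu * r)
      (\<lambda>(i,c). (1 / fact k) * ((1 / fact (c div r)) * mat_deriv (k + c div r) (Mmat q r) z $$ (i, c mod r)))"

(* N(z) in C^{mu q x nu r}, block rows N^0,...,N^{mu-1} *)
definition Nmat :: "nat \<Rightarrow> nat \<Rightarrow> nat \<Rightarrow> nat \<Rightarrow> complex \<Rightarrow> complex mat" where
  "Nmat q r mu nu z = mat (mu * q) (nu * r) (\<lambda>(i,c). Nblk q r nu (i div q) z $$ (i mod q, c))"

definition shiftm :: "nat \<Rightarrow> complex mat" where
  "shiftm n = mat n n (\<lambda>(i,j). if i + 1 = j then 1 else 0)"

definition lvec :: "nat \<Rightarrow> complex mat" where
  "lvec q = mat q 1 (\<lambda>(i,_). if i = q - 1 then 1 else 0)"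

definition phivec :: "nat \<Rightarrow> complex mat" where
  "phivec m = mat m 1 (\<lambda>(i,_). if i = 0 then 1 else 0)"

definition Gmat :: "nat \<Rightarrow> complex \<Rightarrow> complex mat" where
  "Gmat r z = mat r r (\<lambda>(i,j). if j > i then z ^ (j - i - 1) else 0)"

definition Gj0 :: "nat \<Rightarrow> nat \<Rightarrow> complex \<Rightarrow> complex mat" where
  "Gj0 r j z = mat (r - j) r (\<lambda>(i,k). Gmat r z $$ (i,k))"

definition Fmat :: "nat \<Rightarrow> nat \<Rightarrow> complex \<Rightarrow> complex mat" where
  "Fmat r j z = mat (r - j) (r - j - 1)
      (\<lambda>(i,k). if i = k then - z else if i = k + 1 then 1 else 0)"

definition Kbot :: "nat \<Rightarrow> nat \<Rightarrow> nat \<Rightarrow> complex \<Rightarrow> complex mat" where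
  "Kbot q r nu z = kron (1\<^sub>m (nu - q)) (1\<^sub>m r) - kron (shiftm (nu - q)) (Gmat r z)"

definition Kbar :: "nat \<Rightarrow> nat \<Rightarrow> nat \<Rightarrow> nat \<Rightarrow> complex \<Rightarrow> complex mat" where
  "Kbar q r nu j z =
    (if j + 2 \<le> r then
       four_block_mat
         (kron (1\<^sub>m q) (Fmat r j z) + kron (shiftm q) (mat_deriv 1 (Fmat r j) z))
         (- kron (lvec q * (phivec (nu - q))\<^sup>T) ((1 / fact j) \<cdot>\<^sub>m mat_deriv j (Gj0 r j) z))
         (0\<^sub>m ((nu - q) * r) (q * (r - j - 1)))
         (Kbot q r nu z)
     else if j = r - 1 then
       four_block_mat (0\<^sub>m q 0) (0\<^sub>m q ((nu - q) * r)) (0\<^sub>m ((nu - q) * r) 0) (Kbot q r nu z)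
     else Kbot q r nu z)"

primrec Kprod :: "nat \<Rightarrow> nat \<Rightarrow> nat \<Rightarrow> nat \<Rightarrow> complex \<Rightarrow> complex mat" where
  "Kprod q r nu 0 z = Kbar q r nu 0 z"
| "Kprod q r nu (Suc i) z = Kprod q r nu i z * Kbar q r nu (Suc i) z"

end

theory Submission
  imports Defs
begin

text \<open>The entries of \<open>N\<^sup>k(z)\<close> are binomial multiples of the divided derivatives
  \<open>dpow z m a = (a choose m) z\<^sup>a\<^sup>-\<^sup>m\<close> of powers of \<open>z\<close>, and so are those of the products
  \<open>N\<^sup>k(z) K\<^sub>0(z) \<cdots> K\<^sub>j\<^sub>-\<^sub>1(z)\<close>. Multiplication by \<open>K\<^sub>j(z)\<close> acts on each row of such a product as a
  difference operator that lowers \<open>k - j\<close> by one (Pascal's rule and a convolution identity for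
  \<open>dpow\<close>), so the product vanishes as soon as \<open>j > k\<close>: this is (i). Each \<open>K\<^sub>j(z)\<close> is block upper
  triangular with injective, triangular diagonal blocks, so the products have full column rank:
  this is (ii). Finally \<open>N(z)\<close> maps suitable columns of the products to a unit lower triangular
  matrix with \<open>q min{\<mu>, r}\<close> columns, so \<open>rank N(z) \<ge> q min{\<mu>, r}\<close>; as the product
  \<open>N(z) K\<^sub>0(z) \<cdots> K\<^sub>\<mu>\<^sub>-\<^sub>1(z)\<close> vanishes, rank-nullity upgrades this inequality to (iii).\<close>

lemma block_index_less: "l < (a::nat) \<Longrightarrow> t < b \<Longrightarrow> l * b + t < a * b"
  by (metis add.commute add_mult_distrib2 mult.commute mult_Suc_right nat_add_left_cancel_less
      less_eq_Suc_le mult_le_mono1 order_less_le_trans)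

lemma block_indexE:
  fixes c a b :: nat
  assumes "c < a * b"
  obtains l t where "l < a" "t < b" "c = l * b + t"
proof
  show "c div b < a" using assms by (simp add: less_mult_imp_div_less)
  show "c mod b < b" using assms by (cases b) auto
qed simp

lemma two_block_indexE:
  fixes c a b d e :: nat
  assumes "c < a * b + d * e"
  obtains (first) l t where "l < a" "t < b" "c = l * b + t"
  | (second) m t where "m < d" "t < e" "c = a * b + (m * e + t)"
proof (cases "c < a * b")
  case True
  then show ?thesis by (elim block_indexE) (rule first)
next
  case False
  then have "c - a * b < d * e" using assms by simp
  then obtain m t where "m < d" "t < e" "c - a * b = m * e + t" by (elim block_indexE)
  with False show ?thesis by (intro second[of m t]) simp_all
qed

lemma block_index_less_lex:
  fixes b :: nat
  assumes "s < b" "s' < b" "l' * b + s' < l * b + s"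
  shows "l' < l \<or> (l' = l \<and> s' < s)"
proof (rule ccontr)
  assume "\<not> ?thesis"
  then consider "l < l'" | "l' = l" "s \<le> s'" by linarith
  then show False
  proof cases
    case 1
    then have "Suc l * b \<le> l' * b" by (intro mult_right_mono) auto
    then show False using assms by simp
  qed (use assms in simp)
qed

lemma sum_lessThan_add:
  fixes f :: "nat \<Rightarrow> 'a::comm_monoid_add"
  shows "(\<Sum>p<a + b. f p) = (\<Sum>p<a. f p) + (\<Sum>p<b. f (a + p))"
  by (induction b) (simp_all add: add.assoc)

lemma sum_lessThan_mult:
  fixes f :: "nat \<Rightarrow> 'a::comm_monoid_add"
  shows "(\<Sum>p<a * b. f p) = (\<Sum>l<a. \<Sum>t<b. f (l * b + t))"
proof (induction a)
  case (Suc a)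
  have "(\<Sum>p<Suc a * b. f p) = (\<Sum>p<a * b. f p) + (\<Sum>t<b. f (a * b + t))"
    using sum_lessThan_add[of f "a * b" b] by (simp add: add.commute)
  with Suc show ?case by simp
qed simp

lemma sum_lessThan_delta2:
  fixes f :: "nat \<Rightarrow> nat \<Rightarrow> 'a::comm_monoid_add"
  shows "(\<Sum>l<a. \<Sum>t<b. if l = i \<and> t = j then f l t else 0) =
    (if i < a \<and> j < b then f i j else 0)"
proof -
  have "(\<Sum>t<b. if l = i \<and> t = j then f l t else 0) =
      (if l = i then if j < b then f i j else 0 else 0)" for l
    by (cases "l = i") (simp_all add: sum.delta')
  then show ?thesis by (simp add: sum.delta')
qed

lemma sum_lessThan_mult_truncate:
  fixes f g :: "nat \<Rightarrow> 'a::semiring_0"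
  assumes "\<And>t. b \<le> t \<Longrightarrow> t < s \<Longrightarrow> g t = 0"
  shows "(\<Sum>t<b. f t * (if t < s then g t else 0)) = (\<Sum>t<s. f t * g t)"
proof -
  have "(\<Sum>t<b. f t * (if t < s then g t else 0)) = (\<Sum>t<min b s. f t * g t)"
    by (rule sum.mono_neutral_cong_right) auto
  also have "\<dots> = (\<Sum>t<s. f t * g t)"
    by (rule sum.mono_neutral_left) (auto simp: assms)
  finally show ?thesis .
qed

section \<open>Matrices over a field\<close>

lemma index_mult_mat_sum:
  assumes "A \<in> carrier_mat nr n" "B \<in> carrier_mat n nc" "i < nr" "c < nc"
  shows "(A * B) $$ (i, c) = (\<Sum>p<n. A $$ (i, p) * B $$ (p, c))"
  using assms by (auto simp: scalar_prod_def atLeast0LessThan intro!: sum.cong)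

lemma mult_mat_vec_eq_0_triangular:
  fixes A :: "'a::field mat"
  assumes A: "A \<in> carrier_mat nr nc" and v: "v \<in> carrier_vec nc" and Av: "A *\<^sub>v v = 0\<^sub>v nr"
    and wf: "wf R"
    and rho: "\<And>c. c < nc \<Longrightarrow> rho c < nr"
    and diag: "\<And>c. c < nc \<Longrightarrow> A $$ (rho c, c) \<noteq> 0"
    and off: "\<And>c c'. c < nc \<Longrightarrow> c' < nc \<Longrightarrow> c' \<noteq> c \<Longrightarrow> (c', c) \<notin> R \<Longrightarrow> A $$ (rho c, c') = 0"
  shows "v = 0\<^sub>v nc"
proof -
  have "c < nc \<longrightarrow> v $ c = 0" for c
  proof (induction c rule: wf_induct_rule[OF wf])
    case (1 c)
    show ?case
    proof
      assume c: "c < nc"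
      have "0 = (A *\<^sub>v v) $ rho c" using Av rho[OF c] by simp
      also have "\<dots> = (\<Sum>c'<nc. A $$ (rho c, c') * v $ c')"
        using A v rho[OF c] by (auto simp: scalar_prod_def atLeast0LessThan intro!: sum.cong)
      also have "\<dots> = (\<Sum>c'<nc. if c' = c then A $$ (rho c, c) * v $ c else 0)"
        using 1 off[OF c] by (intro sum.cong refl) auto
      also have "\<dots> = A $$ (rho c, c) * v $ c" using c by (simp add: sum.delta')
      finally show "v $ c = 0" using diag[OF c] by simp
    qed
  qed
  then show ?thesis using v by (intro eq_vecI) auto
qed

lemma four_block_mat_mult_vec_eq_0_upper:
  fixes A B D :: "'a::field mat"
  assumes A: "A \<in> carrier_mat nr1 nc1" and B: "B \<in> carrier_mat nr1 nc2" and D: "D \<in> carrier_mat nr2 nc2"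
    and A_inj: "\<And>a. a \<in> carrier_vec nc1 \<Longrightarrow> A *\<^sub>v a = 0\<^sub>v nr1 \<Longrightarrow> a = 0\<^sub>v nc1"
    and D_inj: "\<And>d. d \<in> carrier_vec nc2 \<Longrightarrow> D *\<^sub>v d = 0\<^sub>v nr2 \<Longrightarrow> d = 0\<^sub>v nc2"
    and v: "v \<in> carrier_vec (nc1 + nc2)"
    and Mv: "four_block_mat A B (0\<^sub>m nr2 nc1) D *\<^sub>v v = 0\<^sub>v (nr1 + nr2)"
  shows "v = 0\<^sub>v (nc1 + nc2)"
proof -
  define a d where "a = vec_first v nc1" and "d = vec_last v nc2"
  have a: "a \<in> carrier_vec nc1" and d: "d \<in> carrier_vec nc2" and v_eq: "v = a @\<^sub>v d"
    using v by (simp_all add: a_def d_def)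
  have "0\<^sub>v (nr1 + nr2) = 0\<^sub>v nr1 @\<^sub>v (0\<^sub>v nr2 :: 'a vec)" by (intro eq_vecI) auto
  moreover have "0\<^sub>m nr2 nc1 *\<^sub>v a = 0\<^sub>v nr2" by (intro eq_vecI) (use a in auto)
  ultimately have "(A *\<^sub>v a + B *\<^sub>v d) @\<^sub>v (D *\<^sub>v d) = 0\<^sub>v nr1 @\<^sub>v 0\<^sub>v nr2"
    using Mv four_block_mat_mult_vec[OF A B _ D a d] D d by (simp add: v_eq)
  then have Ad: "A *\<^sub>v a + B *\<^sub>v d = 0\<^sub>v nr1" and Dd: "D *\<^sub>v d = 0\<^sub>v nr2"
    using append_vec_eq[of "A *\<^sub>v a + B *\<^sub>v d" nr1 "0\<^sub>v nr1"] A B a d by auto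
  have d0: "d = 0\<^sub>v nc2" using D_inj[OF d Dd] .
  moreover have "B *\<^sub>v 0\<^sub>v nc2 = 0\<^sub>v nr1" using B by (intro eq_vecI) auto
  ultimately have "A *\<^sub>v a = 0\<^sub>v nr1" using Ad A a by simp
  then have "a = 0\<^sub>v nc1" using A_inj[OF a] by simp
  with d0 show ?thesis by (auto simp: v_eq)
qed

lemma linear_map_mult_mat_vec:
  fixes A :: "'a::field mat"
  assumes A: "A \<in> carrier_mat nr nc"
  shows "linear_map class_ring (module_vec TYPE('a) nc) (module_vec TYPE('a) nr) (\<lambda>v. A *\<^sub>v v)"
proof -
  interpret V: vec_space "TYPE('a)" nc .
  interpret W: vec_space "TYPE('a)" nr .
  show ?thesis
    unfolding linear_map_def mod_hom_def mod_hom_axioms_def module_hom_def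
    using A V.vectorspace_axioms W.vectorspace_axioms V.module_axioms W.module_axioms
    by (auto simp: module_vec_simps mult_add_distrib_mat_vec mult_mat_vec)
qed

lemma rank_plus_kernel_dim:
  fixes A :: "'a::field mat"
  assumes A: "A \<in> carrier_mat nr nc"
  shows "vec_space.rank nr A + kernel_dim A = nc"
proof -
  interpret V: vec_space "TYPE('a)" nc .
  interpret W: vec_space "TYPE('a)" nr .
  interpret L: linear_map class_ring "module_vec TYPE('a) nc" "module_vec TYPE('a) nr" "\<lambda>v. A *\<^sub>v v"
    by (rule linear_map_mult_mat_vec[OF A])
  have im: "L.imT = W.span (set (cols A))"
    unfolding W.col_space_eq[OF A, unfolded W.col_space_def] L.im_def using A by (auto simp: module_vec_simps)
  have ker: "L.kerT = mat_kernel A"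
    using A unfolding L.ker_def mat_kernel_def by auto
  have "vectorspace.dim class_ring (W.vs L.imT) + vectorspace.dim class_ring (V.vs L.kerT) = V.dim"
    by (rule L.rank_nullity) simp
  then show ?thesis
    unfolding W.rank_def im ker V.dim_is_n using A by (simp add: kernel_dim_def)
qed

lemma rank_eq_dim_col_if_inj:
  fixes A :: "'a::field mat"
  assumes A: "A \<in> carrier_mat nr nc"
    and inj: "\<And>v. v \<in> carrier_vec nc \<Longrightarrow> A *\<^sub>v v = 0\<^sub>v nr \<Longrightarrow> v = 0\<^sub>v nc"
  shows "vec_space.rank nr A = nc"
proof -
  interpret V: vec_space "TYPE('a)" nc .
  interpret L: linear_map class_ring "module_vec TYPE('a) nc" "module_vec TYPE('a) nr" "\<lambda>v. A *\<^sub>v v"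
    by (rule linear_map_mult_mat_vec[OF A])
  have "inj_on (\<lambda>v. A *\<^sub>v v) (carrier_vec nc)"
  proof (rule inj_onI)
    fix v w assume v: "v \<in> carrier_vec nc" and w: "w \<in> carrier_vec nc" and e: "A *\<^sub>v v = A *\<^sub>v w"
    have "A *\<^sub>v (v - w) = 0\<^sub>v nr"
      using A v w e by (simp add: mult_minus_distrib_mat_vec minus_cancel_vec)
    then have vw: "v - w = 0\<^sub>v nc" using inj v w by simp
    show "v = w"
    proof (rule eq_vecI)
      fix i assume "i < dim_vec w"
      then have "(v - w) $ i = 0" using vw w by simp
      then show "v $ i = w $ i" using \<open>i < dim_vec w\<close> v w by simp
    qed (use v w in simp)
  qed
  then have "vectorspace.dim class_ring (V.vs L.kerT) = 0"
    by (intro L.inj_imp_dim_ker0) (simp add: module_vec_simps)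
  moreover have "L.kerT = mat_kernel A"
    using A unfolding L.ker_def mat_kernel_def by (auto simp: module_vec_simps)
  ultimately have "kernel_dim A = 0" using A by (simp add: kernel_dim_def)
  then show ?thesis using rank_plus_kernel_dim[OF A] by simp
qed

lemma (in vec_space) rank_le_if_span_subset:
  assumes A: "A \<in> carrier_mat n a" and B: "B \<in> carrier_mat n b"
    and sub: "span (set (cols A)) \<subseteq> span (set (cols B))"
  shows "rank A \<le> rank B"
proof -
  let ?X = "span (set (cols A))" and ?Y = "span (set (cols B))"
  have cA: "set (cols A) \<subseteq> carrier_vec n" and cB: "set (cols B) \<subseteq> carrier_vec n"
    using A B cols_dim[of A] cols_dim[of B] by auto
  have sY: "subspace class_ring ?Y V" by (rule span_is_subspace[OF cB])
  have "vectorspace.dim class_ring ((vs ?Y)\<lparr>carrier := ?X\<rparr>) \<le> vectorspace.dim class_ring (vs ?Y)"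
  proof (rule vectorspace.subspace_dim)
    show "vectorspace class_ring (vs ?Y)" by (rule subspace_is_vs[OF sY])
    show "subspace class_ring ?X (vs ?Y)"
      by (rule nested_subspaces[OF sY span_is_subspace[OF cA] sub])
    show "vectorspace.fin_dim class_ring (vs ?Y)" by (rule fin_dim_span_cols[OF B])
    show "vectorspace.fin_dim class_ring ((vs ?Y)\<lparr>carrier := ?X\<rparr>)"
      using fin_dim_span_cols[OF A] by simp
  qed
  then show ?thesis unfolding rank_def by simp
qed

lemma rank_mult_le:
  fixes A B :: "'a::field mat"
  assumes A: "A \<in> carrier_mat nr n" and B: "B \<in> carrier_mat n nc"
  shows "vec_space.rank nr (A * B) \<le> vec_space.rank nr A"
proof -
  interpret W: vec_space "TYPE('a)" nr .
  have AB: "A * B \<in> carrier_mat nr nc" using A B by simp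
  show ?thesis
  proof (rule W.rank_le_if_span_subset[OF AB A], rule subsetI)
    fix y assume "y \<in> W.span (set (cols (A * B)))"
    then obtain x where x: "x \<in> carrier_vec nc" and y: "y = (A * B) *\<^sub>v x"
      using W.col_space_eq[OF AB] AB unfolding W.col_space_def by auto
    have "y = A *\<^sub>v (B *\<^sub>v x)" using y assoc_mult_mat_vec[OF A B x] by simp
    then show "y \<in> W.span (set (cols A))"
      using W.col_space_eq[OF A] A B x unfolding W.col_space_def by auto
  qed
qed

lemma (in vectorspace) subspace_eq_carrier_if_dim_ge:
  assumes sX: "subspace K X V" and fin: "fin_dim" and fX: "vectorspace.fin_dim K (vs X)"
    and d: "dim \<le> vectorspace.dim K (vs X)"
  shows "X = carrier V"
proof -
  have vX: "vectorspace K (vs X)" by (rule subspace_is_vs[OF sX])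
  have smX: "submodule K X V" using sX unfolding subspace_def by simp
  then have XV: "X \<subseteq> carrier V" unfolding submodule_def by simp
  obtain b where fb: "finite b" and bb: "vectorspace.basis K (vs X) b"
    using vectorspace.finite_basis_exists[OF vX fX] by blast
  then have bX: "b \<subseteq> X" and "LinearCombinations.module.lin_indpt K (vs X) b"
    unfolding vectorspace.basis_def[OF vX] by auto
  then have li: "lin_indpt b" using span_li_not_depend(2)[OF _ smX] by simp
  have "card b = vectorspace.dim K (vs X)" using vectorspace.dim_basis[OF vX fb bb] by simp
  then have "basis b" using bX XV d by (intro dim_li_is_basis[OF fin fb _ li]) auto
  then have "span b = carrier V" unfolding basis_def by simp
  moreover have "span b \<subseteq> X" by (rule span_is_subset[OF bX smX])
  ultimately show ?thesis using XV by auto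
qed

lemma mat_kernel_subspace:
  fixes N :: "'a::field mat"
  assumes N: "N \<in> carrier_mat nr nc"
  shows "subspace class_ring (mat_kernel N) (module_vec TYPE('a) nc)"
proof -
  interpret V: vec_space "TYPE('a)" nc .
  show ?thesis
    unfolding subspace_def submodule_def
    using N V.vectorspace_axioms V.module_axioms
    by (auto simp: mat_kernel_def module_vec_simps mult_add_distrib_mat_vec mult_mat_vec class_ring_simps)
qed

lemma mat_kernel_eq_span_cols:
  fixes N K :: "'a::field mat"
  assumes N: "N \<in> carrier_mat nr nc" and K: "K \<in> carrier_mat nc d" and NK: "N * K = 0\<^sub>m nr d"
    and rk: "kernel_dim N \<le> vec_space.rank nc K"
  shows "mat_kernel N = module.span class_ring (module_vec TYPE('a) nc) (set (cols K))"
    and "kernel_dim N = vec_space.rank nc K"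
proof -
  interpret V: vec_space "TYPE('a)" nc .
  interpret Ker: kernel nr nc N by (unfold_locales, rule N)
  let ?X = "V.span (set (cols K))"
  have cK: "set (cols K) \<subseteq> carrier_vec nc" using K cols_dim[of K] by simp
  have "?X \<subseteq> mat_kernel N"
  proof
    fix y assume "y \<in> ?X"
    then obtain x where x: "x \<in> carrier_vec d" and y: "y = K *\<^sub>v x"
      using V.col_space_eq[OF K] K unfolding V.col_space_def by auto
    have "N *\<^sub>v y = (N * K) *\<^sub>v x" using y assoc_mult_mat_vec[OF N K x] by simp
    then have "N *\<^sub>v y = 0\<^sub>v nr" using NK x by auto
    then show "y \<in> mat_kernel N" using y K x N by (auto intro: mat_kernelI)
  qed
  then have sXK: "subspace class_ring ?X Ker.VK"
    using V.nested_subspaces[OF mat_kernel_subspace[OF N] V.span_is_subspace[OF cK]] by simp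
  have finK: "Ker.Ker.fin_dim"
    using kernel_basis_exists[OF N] unfolding Ker.Ker.fin_dim_def Ker.Ker.basis_def by blast
  have finX: "vectorspace.fin_dim class_ring (Ker.VK\<lparr>carrier := ?X\<rparr>)"
    using V.fin_dim_span_cols[OF K] by simp
  have rank_K: "vec_space.rank nc K = vectorspace.dim class_ring (Ker.VK\<lparr>carrier := ?X\<rparr>)"
    unfolding V.rank_def by simp
  have kd: "kernel_dim N = Ker.dim" using N by (simp add: kernel_dim_def)
  have "vectorspace.dim class_ring (Ker.VK\<lparr>carrier := ?X\<rparr>) \<le> Ker.dim"
    by (rule Ker.Ker.subspace_dim[OF sXK finK finX])
  then show "kernel_dim N = vec_space.rank nc K" using rank_K kd rk by simp
  have "?X = mat_kernel N"
    using Ker.Ker.subspace_eq_carrier_if_dim_ge[OF sXK finK finX] rank_K kd rk by simp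
  then show "mat_kernel N = module.span class_ring (module_vec TYPE('a) nc) (set (cols K))" by simp
qed

section \<open>Divided derivatives of powers\<close>

text \<open>\<open>dpow z m a\<close> is \<open>(d/dz)\<^sup>m z\<^sup>a / m!\<close>.\<close>

definition dpow :: "'a::comm_semiring_1 \<Rightarrow> nat \<Rightarrow> nat \<Rightarrow> 'a" where
  "dpow z m a = of_nat (a choose m) * z ^ (a - m)"

lemma dpow_eq_0: "a < m \<Longrightarrow> dpow z m a = 0"
  by (simp add: dpow_def binomial_eq_0)

lemma dpow_same [simp]: "dpow z m m = 1"
  by (simp add: dpow_def)

lemma dpow_0: "dpow z 0 a = z ^ a"
  by (simp add: dpow_def)

lemma dpow_Suc_Suc: "dpow z (Suc m) (Suc a) = z * dpow z (Suc m) a + dpow z m a"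
proof -
  consider "a < m" | "a = m" | "m < a" by linarith
  then show ?thesis
  proof cases
    case 3
    then have "Suc a - Suc m = Suc (a - Suc m)" "a - m = Suc (a - Suc m)" by auto
    then show ?thesis by (simp add: dpow_def algebra_simps)
  qed (simp_all add: dpow_def binomial_eq_0)
qed

lemma higher_deriv_constant: "(deriv ^^ n) (\<lambda>w::complex. c) = (\<lambda>w. if n = 0 then c else 0)"
  by (induction n) (auto intro!: DERIV_imp_deriv derivative_eq_intros)

lemma higher_deriv_power_dpow: "(deriv ^^ n) (\<lambda>w::complex. w ^ a) = (\<lambda>w. fact n * dpow w n a)"
proof (induction n)
  case (Suc n)
  have "deriv (\<lambda>w. fact n * dpow w n a) w = fact (Suc n) * dpow w (Suc n) a" for w :: complex
  proof (rule DERIV_imp_deriv)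
    have "(a choose n) * (a - n) = (a choose Suc n) * Suc n"
      by (metis binomial_absorb_comp binomial_absorption mult.commute)
    then have "(of_nat (a choose n) * of_nat (a - n) :: complex) = of_nat (a choose Suc n) * of_nat (Suc n)"
      by (metis of_nat_mult)
    then have "fact n * of_nat (a choose n) * (of_nat (a - n) * w ^ (a - n - 1)) =
        (fact (Suc n) * dpow w (Suc n) a :: complex)"
      unfolding dpow_def fact_Suc by (simp add: mult_ac)
    then show "((\<lambda>w. fact n * dpow w n a) has_field_derivative fact (Suc n) * dpow w (Suc n) a) (at w)"
      unfolding dpow_def by (auto intro!: derivative_eq_intros simp: algebra_simps)
  qed
  with Suc show ?case by auto
qed (simp add: dpow_def)

text \<open>As \<open>\<Sum>\<^sub>a dpow z m a x\<^sup>a = x\<^sup>m / (1 - z x)\<^sup>m\<^sup>+\<^sup>1\<close>, this compares coefficients of a product of two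
  such series; the omitted summands contain \<open>dpow z A u\<close> with \<open>u < i \<le> A\<close> and vanish.\<close>

lemma dpow_convolution:
  assumes "i \<le> A"
  shows "(\<Sum>t<s. dpow z A (i + t) * dpow z j (s - t - 1)) = dpow z (A + j + 1) (i + s)"
proof (induction s arbitrary: j)
  case (Suc s)
  have shift: "dpow z j (s - t) = z * dpow z j (s - t - 1) + (if j = 0 then 0 else dpow z (j - 1) (s - t - 1))"
    if "t < s" for t
  proof -
    have "s - t = Suc (s - t - 1)" using that by simp
    then show ?thesis by (cases j) (simp_all add: dpow_0 dpow_Suc_Suc)
  qed
  have "(\<Sum>t<s. dpow z A (i + t) * dpow z j (Suc s - t - 1)) =
      (\<Sum>t<s. z * (dpow z A (i + t) * dpow z j (s - t - 1)) +
        (if j = 0 then 0 else dpow z A (i + t) * dpow z (j - 1) (s - t - 1)))"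
    by (intro sum.cong refl) (simp add: shift algebra_simps)
  also have "\<dots> = z * (\<Sum>t<s. dpow z A (i + t) * dpow z j (s - t - 1)) +
      (if j = 0 then 0 else \<Sum>t<s. dpow z A (i + t) * dpow z (j - 1) (s - t - 1))"
    by (simp add: sum.distrib sum_distrib_left)
  finally show ?case
    using Suc.IH[of j] Suc.IH[of "j - 1"] dpow_Suc_Suc[of z "A + j" "i + s"]
    by (cases j) (simp_all add: dpow_0 dpow_eq_0)
qed (use assms in \<open>simp add: dpow_eq_0\<close>)

lemma binomial_difference:
  assumes "L \<ge> 1"
  shows "(of_nat ((n + L) choose L) :: 'a::comm_ring_1) - of_nat ((n + (L - 1)) choose (L - 1)) =
    (if n = 0 then 0 else of_nat ((n - 1 + L) choose L))"
proof (cases n)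
  case (Suc n')
  obtain L' where L: "L = Suc L'" using assms by (cases L) auto
  have "(n + L) choose L = ((n + L') choose L') + ((n + L') choose L)" using L by simp
  then show ?thesis using Suc L by simp
qed simp

lemma binomial_dpow_recurrence:
  fixes z :: "'a::comm_ring_1"
  shows "of_nat ((n + l) choose l) * dpow z (n + l) a * (- z) + of_nat ((n + l) choose l) * dpow z (n + l) (Suc a)
     - (if 0 < l then of_nat ((n + (l - 1)) choose (l - 1)) * dpow z (n + (l - 1)) a else 0)
   = (if n = 0 then 0 else of_nat ((n - 1 + l) choose l) * dpow z (n - 1 + l) a)"
proof (cases "n + l")
  case 0
  then show ?thesis by (simp add: dpow_0 algebra_simps)
next
  case (Suc M)
  have e: "dpow z (n + l) (Suc a) = z * dpow z (n + l) a + dpow z M a"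
    using dpow_Suc_Suc[of z M a] Suc by simp
  show ?thesis
  proof (cases l)
    case (Suc l')
    have p: "(n + l) choose l = (M choose l') + (M choose l)" and M: "n + (l - 1) = M"
      using Suc \<open>n + l = Suc M\<close> by simp_all
    show ?thesis
    proof (cases n)
      case 0
      then have "M choose l = 0" using Suc \<open>n + l = Suc M\<close> by simp
      then show ?thesis using e p M Suc 0 by (simp add: algebra_simps)
    next
      case (Suc n')
      then have "n - 1 + l = M" using \<open>n + l = Suc M\<close> by simp
      then show ?thesis using e p M \<open>l = Suc l'\<close> Suc by (simp add: algebra_simps)
    qed
  qed (use e Suc in \<open>simp add: algebra_simps\<close>)
qed

lemma mat_deriv_dims [simp]:
  "dim_row (mat_deriv k A z) = dim_row (A z)" "dim_col (mat_deriv k A z) = dim_col (A z)"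
  by (simp_all add: mat_deriv_def)

lemma mat_deriv_index:
  "i < dim_row (A z) \<Longrightarrow> j < dim_col (A z) \<Longrightarrow> mat_deriv k A z $$ (i, j) = (deriv ^^ k) (\<lambda>w. A w $$ (i, j)) z"
  by (simp add: mat_deriv_def)

lemma kron_dims [simp]:
  "dim_row (kron A B) = dim_row A * dim_row B" "dim_col (kron A B) = dim_col A * dim_col B"
  by (simp_all add: kron_def)

lemma kron_index:
  "i < dim_row A * dim_row B \<Longrightarrow> j < dim_col A * dim_col B \<Longrightarrow>
   kron A B $$ (i, j) = A $$ (i div dim_row B, j div dim_col B) * B $$ (i mod dim_row B, j mod dim_col B)"
  by (simp add: kron_def)

lemma Fmat_dims [simp]: "dim_row (Fmat r j z) = r - j" "dim_col (Fmat r j z) = r - Suc j"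
  by (simp_all add: Fmat_def)

lemma Gj0_dims [simp]: "dim_row (Gj0 r j z) = r - j" "dim_col (Gj0 r j z) = r"
  by (simp_all add: Gj0_def)

lemma Gmat_dims [simp]: "dim_row (Gmat r z) = r" "dim_col (Gmat r z) = r"
  by (simp_all add: Gmat_def)

lemma shiftm_dims [simp]: "dim_row (shiftm n) = n" "dim_col (shiftm n) = n"
  by (simp_all add: shiftm_def)

lemma lvec_dims [simp]: "dim_row (lvec n) = n" "dim_col (lvec n) = 1"
  by (simp_all add: lvec_def)

lemma phivec_dims [simp]: "dim_row (phivec n) = n" "dim_col (phivec n) = 1"
  by (simp_all add: phivec_def)

lemma Kbot_carrier: "Kbot q r nu z \<in> carrier_mat ((nu - q) * r) ((nu - q) * r)"
  by (simp add: Kbot_def carrier_matI)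

lemma Kbot_index:
  assumes "m < nu - q" "t < r" "m' < nu - q" "s < r"
  shows "Kbot q r nu z $$ (m * r + t, m' * r + s) =
    (if m = m' \<and> t = s then 1 else 0) - (if m + 1 = m' \<and> t < s then z ^ (s - t - 1) else 0)"
  using assms block_index_less[OF assms(1,2)] block_index_less[OF assms(3,4)]
  by (simp add: Kbot_def kron_index shiftm_def Gmat_def)

lemma Fmat_deriv_index:
  assumes "t < r - j" "s < r - Suc j"
  shows "mat_deriv 1 (Fmat r j) z $$ (t, s) = (if t = s then -1 else 0)"
proof -
  have "(\<lambda>w. Fmat r j w $$ (t, s)) = (\<lambda>w. if t = s then - w else if t = s + 1 then 1 else 0)"
    using assms by (auto simp: Fmat_def)
  then show ?thesis
    using assms by (auto simp: mat_deriv_index intro!: DERIV_imp_deriv derivative_eq_intros)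
qed

lemma Gj0_deriv_index:
  assumes "t < r - j" "s < r"
  shows "mat_deriv j (Gj0 r j) z $$ (t, s) = (if t < s then fact j * dpow z j (s - t - 1) else 0)"
proof -
  have "(\<lambda>w. Gj0 r j w $$ (t, s)) = (if t < s then (\<lambda>w. w ^ (s - t - 1)) else (\<lambda>w. 0))"
    using assms by (auto simp: Gj0_def Gmat_def)
  then show ?thesis
    using assms by (auto simp: mat_deriv_index higher_deriv_power_dpow higher_deriv_constant)
qed

lemma Nblk_index:
  assumes "i < q" "l < nu" "t < r"
  shows "Nblk q r nu k z $$ (i, l * r + t) = of_nat ((k + l) choose l) * dpow z (k + l) (i + t)"
proof -
  have "(\<lambda>w. Mmat q r w $$ (i, t)) = (\<lambda>w. w ^ (i + t))"
    using assms by (simp add: Mmat_def scalar_prod_def power_add)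
  then have "mat_deriv (k + l) (Mmat q r) z $$ (i, t) = fact (k + l) * dpow z (k + l) (i + t)"
    using assms by (simp add: mat_deriv_index Mmat_def higher_deriv_power_dpow)
  moreover have "(of_nat ((k + l) choose l) :: complex) = fact (k + l) / (fact l * fact k)"
    using binomial_fact[of l "k + l"] by simp
  ultimately show ?thesis
    using assms block_index_less[OF assms(2,3)] by (simp add: Nblk_def field_simps)
qed

lemma Nblk_carrier: "Nblk q r nu k z \<in> carrier_mat q (nu * r)"
  by (simp add: Nblk_def)

lemma Nmat_carrier: "Nmat q r mu nu z \<in> carrier_mat (mu * q) (nu * r)"
  by (simp add: Nmat_def)

lemma Nmat_mult_index:
  assumes B: "B \<in> carrier_mat (nu * r) d" and "k < mu" "i < q" "c < d"
  shows "(Nmat q r mu nu z * B) $$ (k * q + i, c) = (Nblk q r nu k z * B) $$ (i, c)"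
proof -
  have "row (Nmat q r mu nu z) (k * q + i) = row (Nblk q r nu k z) i"
    using assms block_index_less[OF assms(2,3)] by (intro eq_vecI) (simp_all add: Nmat_def Nblk_def)
  then show ?thesis using assms block_index_less[OF assms(2,3)] by (simp add: Nmat_def Nblk_def)
qed

section \<open>The factors \<open>K\<^sub>j(z)\<close>\<close>

locale Kbar_params =
  fixes q r nu :: nat and z :: complex
begin

abbreviation K :: "nat \<Rightarrow> complex mat" where "K j \<equiv> Kbar q r nu j z"
abbreviation KB :: "complex mat" where "KB \<equiv> Kbot q r nu z"

definition Krows :: "nat \<Rightarrow> nat" where
  "Krows j = q * (r - j) + (nu - q) * r"

definition Ktop_left :: "nat \<Rightarrow> complex mat" where
  "Ktop_left j = kron (1\<^sub>m q) (Fmat r j z) + kron (shiftm q) (mat_deriv 1 (Fmat r j) z)"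

definition Ktop_right :: "nat \<Rightarrow> complex mat" where
  "Ktop_right j = - kron (lvec q * (phivec (nu - q))\<^sup>T) ((1 / fact j) \<cdot>\<^sub>m mat_deriv j (Gj0 r j) z)"

lemma Kbar_split:
  "j + 2 \<le> r \<Longrightarrow> K j = four_block_mat (Ktop_left j) (Ktop_right j) (0\<^sub>m ((nu - q) * r) (q * (r - Suc j))) KB"
  by (simp add: Kbar_def Ktop_left_def Ktop_right_def)

lemma Kbar_last: "Suc j = r \<Longrightarrow> K j = four_block_mat (0\<^sub>m q 0) (0\<^sub>m q ((nu - q) * r)) (0\<^sub>m ((nu - q) * r) 0) KB"
  by (auto simp: Kbar_def)

lemma Kbar_beyond: "r \<le> j \<Longrightarrow> 1 \<le> r \<Longrightarrow> K j = KB"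
proof -
  assume "r \<le> j" "1 \<le> r"
  then have "\<not> j + 2 \<le> r" "j \<noteq> r - 1" by linarith+
  then show ?thesis unfolding Kbar_def by simp
qed

lemma Ktop_left_carrier: "Ktop_left j \<in> carrier_mat (q * (r - j)) (q * (r - Suc j))"
  by (simp add: Ktop_left_def carrier_matI)

lemma Ktop_right_carrier: "Ktop_right j \<in> carrier_mat (q * (r - j)) ((nu - q) * r)"
  by (simp add: Ktop_right_def carrier_matI)

lemma Kbar_carrier: "1 \<le> r \<Longrightarrow> K j \<in> carrier_mat (Krows j) (Krows (Suc j))"
proof -
  assume "1 \<le> r"
  consider "j + 2 \<le> r" | "j = r - 1" | "r \<le> j" by linarith
  then show ?thesis
  proof cases
    case 1
    then show ?thesis unfolding Kbar_split[OF 1] Krows_def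
      using four_block_carrier_mat[OF Ktop_left_carrier Kbot_carrier] by simp
  next
    case 2
    have "four_block_mat (0\<^sub>m q 0) (0\<^sub>m q ((nu - q) * r)) (0\<^sub>m ((nu - q) * r) 0) KB
        \<in> carrier_mat (q + (nu - q) * r) (0 + (nu - q) * r)"
      by (rule four_block_carrier_mat[OF zero_carrier_mat Kbot_carrier])
    then show ?thesis using 2 \<open>1 \<le> r\<close> by (simp add: Kbar_last Krows_def)
  qed (use \<open>1 \<le> r\<close> Kbot_carrier in \<open>simp add: Kbar_beyond Krows_def\<close>)
qed

lemma Ktop_left_index:
  assumes "l < q" "t < r - j" "l' < q" "s < r - Suc j"
  shows "Ktop_left j $$ (l * (r - j) + t, l' * (r - Suc j) + s) =
    (if l = l' \<and> t = s then - z else 0) + (if l = l' \<and> t = Suc s then 1 else 0) +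
    (if l + 1 = l' \<and> t = s then - 1 else 0)"
  using assms block_index_less[OF assms(1,2)] block_index_less[OF assms(3,4)]
  by (auto simp: Ktop_left_def kron_index shiftm_def Fmat_def Fmat_deriv_index[unfolded One_nat_def])

lemma Ktop_right_index:
  assumes "l < q" "t < r - j" "m' < nu - q" "s < r"
  shows "Ktop_right j $$ (l * (r - j) + t, m' * r + s) =
    (if l = q - 1 \<and> m' = 0 \<and> t < s then - dpow z j (s - t - 1) else 0)"
  using assms block_index_less[OF assms(1,2)] block_index_less[OF assms(3,4)]
  by (simp add: Ktop_right_def kron_index Gj0_deriv_index lvec_def phivec_def scalar_prod_def)

lemma sum_mult_Ktop_left:
  fixes X :: "nat \<Rightarrow> nat \<Rightarrow> complex"
  assumes "l' < q" "s < r - Suc j"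
  shows "(\<Sum>l<q. \<Sum>t<r - j. X l t * Ktop_left j $$ (l * (r - j) + t, l' * (r - Suc j) + s)) =
    X l' s * (- z) + X l' (Suc s) - (if 0 < l' then X (l' - 1) s else 0)"
proof -
  have "(\<Sum>l<q. \<Sum>t<r - j. X l t * Ktop_left j $$ (l * (r - j) + t, l' * (r - Suc j) + s)) =
      (\<Sum>l<q. \<Sum>t<r - j. if l = l' \<and> t = s then X l t * - z else 0) +
      (\<Sum>l<q. \<Sum>t<r - j. if l = l' \<and> t = Suc s then X l t else 0) +
      (\<Sum>l<q. \<Sum>t<r - j. if l + 1 = l' \<and> t = s then - X l t else 0)"
    unfolding sum.distrib[symmetric] using assms by (intro sum.cong refl) (simp add: Ktop_left_index)
  moreover have "(\<Sum>l<q. \<Sum>t<r - j. if l + 1 = l' \<and> t = s then - X l t else 0) =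
      (if 0 < l' then - X (l' - 1) s else 0)"
  proof (cases l')
    case (Suc l'')
    then show ?thesis using sum_lessThan_delta2[where f = "\<lambda>l t. - X l t" and a = q and b = "r - j" and i = l'' and j = s] assms by simp
  qed simp
  moreover have "Suc s < r - j" using assms(2) by linarith
  ultimately show ?thesis using assms by (simp add: sum_lessThan_delta2)
qed

lemma sum_mult_Ktop_right:
  fixes X :: "nat \<Rightarrow> nat \<Rightarrow> complex"
  assumes "0 < q" "m' < nu - q" "s < r"
  shows "(\<Sum>l<q. \<Sum>t<r - j. X l t * Ktop_right j $$ (l * (r - j) + t, m' * r + s)) =
    - (if m' = 0 then \<Sum>t<s. X (q - 1) t * dpow z j (s - t - 1) else 0)"
proof -
  have "(\<Sum>l<q. \<Sum>t<r - j. X l t * Ktop_right j $$ (l * (r - j) + t, m' * r + s)) =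
      (\<Sum>l<q. if l = q - 1 then \<Sum>t<r - j. X l t * (if m' = 0 \<and> t < s then - dpow z j (s - t - 1) else 0) else 0)"
    using assms by (intro sum.cong refl) (auto simp: Ktop_right_index)
  also have "\<dots> = (if m' = 0 then \<Sum>t<r - j. X (q - 1) t * (if t < s then - dpow z j (s - t - 1) else 0) else 0)"
    using assms by (simp add: sum.delta')
  also have "\<dots> = (if m' = 0 then \<Sum>t<s. X (q - 1) t * - dpow z j (s - t - 1) else 0)"
    using assms by (subst sum_lessThan_mult_truncate) (auto intro!: dpow_eq_0)
  finally show ?thesis by (simp add: sum_negf)
qed

lemma sum_mult_Kbot:
  fixes Y :: "nat \<Rightarrow> nat \<Rightarrow> complex"
  assumes "m' < nu - q" "s < r"
  shows "(\<Sum>m<nu - q. \<Sum>t<r. Y m t * KB $$ (m * r + t, m' * r + s)) =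
    Y m' s - (if 0 < m' then \<Sum>t<s. Y (m' - 1) t * z ^ (s - t - 1) else 0)"
proof -
  have "(\<Sum>m<nu - q. \<Sum>t<r. Y m t * KB $$ (m * r + t, m' * r + s)) =
      (\<Sum>m<nu - q. \<Sum>t<r. if m = m' \<and> t = s then Y m t else 0) -
      (\<Sum>m<nu - q. \<Sum>t<r. if m + 1 = m' then Y m t * (if t < s then z ^ (s - t - 1) else 0) else 0)"
    unfolding sum_subtractf[symmetric]
  proof (intro sum.cong refl)
    fix m t assume "m \<in> {..<nu - q}" "t \<in> {..<r}"
    then have "m < nu - q" "t < r" by simp_all
    then show "Y m t * KB $$ (m * r + t, m' * r + s) =
        (if m = m' \<and> t = s then Y m t else 0) -
        (if m + 1 = m' then Y m t * (if t < s then z ^ (s - t - 1) else 0) else 0)"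
      by (subst Kbot_index[OF _ _ assms]) (simp_all add: algebra_simps)
  qed
  moreover have "(\<Sum>m<nu - q. \<Sum>t<r. if m + 1 = m' then Y m t * (if t < s then z ^ (s - t - 1) else 0) else 0) =
      (if 0 < m' then \<Sum>t<s. Y (m' - 1) t * z ^ (s - t - 1) else 0)"
  proof (cases m')
    case (Suc m'')
    then have "(\<Sum>m<nu - q. \<Sum>t<r. if m + 1 = m' then Y m t * (if t < s then z ^ (s - t - 1) else 0) else 0) =
        (\<Sum>m<nu - q. if m = m'' then \<Sum>t<r. Y m t * (if t < s then z ^ (s - t - 1) else 0) else 0)"
      by (intro sum.cong refl) auto
    also have "\<dots> = (\<Sum>t<r. Y m'' t * (if t < s then z ^ (s - t - 1) else 0))"
      using assms Suc by (simp add: sum.delta')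
    also have "\<dots> = (\<Sum>t<s. Y m'' t * z ^ (s - t - 1))"
      using assms by (intro sum_lessThan_mult_truncate) auto
    finally show ?thesis using Suc by simp
  qed simp
  ultimately show ?thesis using assms by (simp add: sum_lessThan_delta2)
qed

lemma mult_Kbar_index:
  assumes "1 \<le> r" and P: "P \<in> carrier_mat n (Krows j)" and "i < n" "c < Krows (Suc j)"
  shows "(P * K j) $$ (i, c) =
    (\<Sum>l<q. \<Sum>t<r - j. P $$ (i, l * (r - j) + t) * K j $$ (l * (r - j) + t, c)) +
    (\<Sum>m<nu - q. \<Sum>t<r. P $$ (i, q * (r - j) + (m * r + t)) * K j $$ (q * (r - j) + (m * r + t), c))"
  using index_mult_mat_sum[OF P Kbar_carrier[OF assms(1)] assms(3,4)]
  by (simp add: Krows_def sum_lessThan_add sum_lessThan_mult)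

lemma mult_Kbar_index_top:
  assumes j: "j + 2 \<le> r" and P: "P \<in> carrier_mat n (Krows j)" and i: "i < n"
    and l': "l' < q" and s: "s < r - Suc j"
  shows "(P * K j) $$ (i, l' * (r - Suc j) + s) =
    P $$ (i, l' * (r - j) + s) * (- z) + P $$ (i, l' * (r - j) + Suc s)
    - (if 0 < l' then P $$ (i, (l' - 1) * (r - j) + s) else 0)"
proof -
  let ?c = "l' * (r - Suc j) + s"
  have c: "?c < q * (r - Suc j)" using block_index_less[OF l' s] .
  have top: "K j $$ (l * (r - j) + t, ?c) = Ktop_left j $$ (l * (r - j) + t, ?c)" if "l < q" "t < r - j" for l t
    using block_index_less[OF that] c Ktop_left_carrier[of j] Ktop_right_carrier[of j] Kbot_carrier[of q r nu z]
    by (simp add: Kbar_split[OF j])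
  have bottom: "K j $$ (q * (r - j) + (m * r + t), ?c) = 0" if "m < nu - q" "t < r" for m t
    using block_index_less[OF that] c Ktop_left_carrier[of j] Ktop_right_carrier[of j] Kbot_carrier[of q r nu z]
    by (simp add: Kbar_split[OF j])
  have "?c < Krows (Suc j)" using c by (simp add: Krows_def)
  then have "(P * K j) $$ (i, ?c) =
      (\<Sum>l<q. \<Sum>t<r - j. P $$ (i, l * (r - j) + t) * Ktop_left j $$ (l * (r - j) + t, ?c))"
    using mult_Kbar_index[OF _ P i] j by (simp add: top bottom)
  then show ?thesis using sum_mult_Ktop_left[OF l' s] by simp
qed

lemma mult_Kbar_index_bottom:
  assumes j: "j + 2 \<le> r" and q: "0 < q" and P: "P \<in> carrier_mat n (Krows j)" and i: "i < n"
    and m': "m' < nu - q" and s: "s < r"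
  shows "(P * K j) $$ (i, q * (r - Suc j) + (m' * r + s)) =
    P $$ (i, q * (r - j) + (m' * r + s))
    - (if 0 < m' then \<Sum>t<s. P $$ (i, q * (r - j) + ((m' - 1) * r + t)) * z ^ (s - t - 1) else 0)
    - (if m' = 0 then \<Sum>t<s. P $$ (i, (q - 1) * (r - j) + t) * dpow z j (s - t - 1) else 0)"
proof -
  let ?c = "q * (r - Suc j) + (m' * r + s)"
  have c: "m' * r + s < (nu - q) * r" using block_index_less[OF m' s] .
  have top: "K j $$ (l * (r - j) + t, ?c) = Ktop_right j $$ (l * (r - j) + t, m' * r + s)"
    if "l < q" "t < r - j" for l t
    using block_index_less[OF that] c Ktop_left_carrier[of j] Ktop_right_carrier[of j] Kbot_carrier[of q r nu z]
    by (simp add: Kbar_split[OF j])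
  have bottom: "K j $$ (q * (r - j) + (m * r + t), ?c) = KB $$ (m * r + t, m' * r + s)"
    if "m < nu - q" "t < r" for m t
    using block_index_less[OF that] c Ktop_left_carrier[of j] Ktop_right_carrier[of j] Kbot_carrier[of q r nu z]
    by (simp add: Kbar_split[OF j])
  have "?c < Krows (Suc j)" using c by (simp add: Krows_def)
  then have "(P * K j) $$ (i, ?c) =
      (\<Sum>l<q. \<Sum>t<r - j. P $$ (i, l * (r - j) + t) * Ktop_right j $$ (l * (r - j) + t, m' * r + s)) +
      (\<Sum>m<nu - q. \<Sum>t<r. P $$ (i, q * (r - j) + (m * r + t)) * KB $$ (m * r + t, m' * r + s))"
    using mult_Kbar_index[OF _ P i] j by (simp add: top bottom)
  then show ?thesis using sum_mult_Ktop_right[OF q m' s] sum_mult_Kbot[OF m' s] by simp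
qed

lemma Kbot_inj:
  assumes "d \<in> carrier_vec ((nu - q) * r)" "KB *\<^sub>v d = 0\<^sub>v ((nu - q) * r)"
  shows "d = 0\<^sub>v ((nu - q) * r)"
proof (rule mult_mat_vec_eq_0_triangular[OF Kbot_carrier assms wf_measure, where rho = "\<lambda>c. c"])
  fix c assume c: "c < (nu - q) * r"
  then show "c < (nu - q) * r" .
  from c obtain m t where mt: "m < nu - q" "t < r" and c_eq: "c = m * r + t" by (elim block_indexE)
  then show "KB $$ (c, c) \<noteq> 0" by (simp add: Kbot_index)
  fix c' assume c': "c' < (nu - q) * r" "c' \<noteq> c" "(c', c) \<notin> measure (\<lambda>c. (nu - q) * r - c)"
  then have "c' < c" using c by simp
  from c'(1) obtain m' t' where mt': "m' < nu - q" "t' < r" and c'_eq: "c' = m' * r + t'" by (elim block_indexE)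
  have "m' < m \<or> (m' = m \<and> t' < t)"
    using block_index_less_lex[OF mt(2) mt'(2)] \<open>c' < c\<close> c_eq c'_eq by simp
  then show "KB $$ (c, c') = 0" unfolding c_eq c'_eq Kbot_index[OF mt mt'] by auto
qed

lemma Ktop_left_inj:
  assumes j: "j + 2 \<le> r" and a: "a \<in> carrier_vec (q * (r - Suc j))" and Ka: "Ktop_left j *\<^sub>v a = 0\<^sub>v (q * (r - j))"
  shows "a = 0\<^sub>v (q * (r - Suc j))"
proof (rule mult_mat_vec_eq_0_triangular[OF Ktop_left_carrier a Ka wf_measure,
      where rho = "\<lambda>c. c div (r - Suc j) * (r - j) + Suc (c mod (r - Suc j))"])
  fix c assume c: "c < q * (r - Suc j)"
  then obtain l s where ls: "l < q" "s < r - Suc j" and c_eq: "c = l * (r - Suc j) + s"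
    by (elim block_indexE)
  have s': "Suc s < r - j" using ls(2) by linarith
  have rho: "c div (r - Suc j) * (r - j) + Suc (c mod (r - Suc j)) = l * (r - j) + Suc s"
    using ls c_eq by simp
  show "c div (r - Suc j) * (r - j) + Suc (c mod (r - Suc j)) < q * (r - j)"
    unfolding rho using block_index_less[OF ls(1) s'] .
  show "Ktop_left j $$ (c div (r - Suc j) * (r - j) + Suc (c mod (r - Suc j)), c) \<noteq> 0"
    unfolding rho unfolding c_eq Ktop_left_index[OF ls(1) s' ls] by simp
  fix c' assume c': "c' < q * (r - Suc j)" "c' \<noteq> c" "(c', c) \<notin> measure (\<lambda>c. q * (r - Suc j) - c)"
  then have "c' < c" using c by simp
  from c'(1) obtain l' s' where ls': "l' < q" "s' < r - Suc j" and c'_eq: "c' = l' * (r - Suc j) + s'"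
    by (elim block_indexE)
  have "l' < l \<or> (l' = l \<and> s' < s)"
    using block_index_less_lex[OF ls(2) ls'(2)] \<open>c' < c\<close> c_eq c'_eq by simp
  then show "Ktop_left j $$ (c div (r - Suc j) * (r - j) + Suc (c mod (r - Suc j)), c') = 0"
    unfolding rho c'_eq Ktop_left_index[OF ls(1) s' ls'] by auto
qed

abbreviation N :: "nat \<Rightarrow> complex mat" where "N k \<equiv> Nblk q r nu k z"

text \<open>\<open>NK j k\<close> is the closed form of the product \<open>N k * K 0 * \<dots> * K (j - 1)\<close>.\<close>

definition NK :: "nat \<Rightarrow> nat \<Rightarrow> complex mat" where
  "NK j k = mat q (Krows j) (\<lambda>(i, c).
     if c < q * (r - j) then
       of_nat ((k - j + c div (r - j)) choose (c div (r - j))) *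
       dpow z (k - j + c div (r - j)) (i + c mod (r - j))
     else
       of_nat ((k - j + (q + (c - q * (r - j)) div r)) choose (q + (c - q * (r - j)) div r)) *
       dpow z (k + (q + (c - q * (r - j)) div r)) (i + (c - q * (r - j)) mod r))"

lemma NK_carrier: "NK j k \<in> carrier_mat q (Krows j)"
  by (simp add: NK_def)

lemma NK_index_top:
  assumes "i < q" "l < q" "t < r - j"
  shows "NK j k $$ (i, l * (r - j) + t) = of_nat ((k - j + l) choose l) * dpow z (k - j + l) (i + t)"
  using assms block_index_less[OF assms(2,3)] by (simp add: NK_def Krows_def)

lemma NK_index_bottom:
  assumes "i < q" "m < nu - q" "t < r"
  shows "NK j k $$ (i, q * (r - j) + (m * r + t)) =
    of_nat ((k - j + (q + m)) choose (q + m)) * dpow z (k + (q + m)) (i + t)"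
  using assms block_index_less[OF assms(2,3)] by (simp add: NK_def Krows_def)

end

section \<open>The products \<open>N\<^sup>k(z) K\<^sub>0(z) \<cdots> K\<^sub>j(z)\<close> and the kernel of \<open>N(z)\<close>\<close>

locale Kbar_setting = Kbar_params +
  assumes q_pos: "0 < q" and r_pos: "1 \<le> r" and q_less_nu: "q < nu"
begin

lemma Krows_0: "Krows 0 = nu * r"
  using q_less_nu by (simp add: Krows_def flip: add_mult_distrib)

lemma Nblk_eq_NK_0: "N k = NK 0 k"
proof (rule eq_matI)
  fix i c assume "i < dim_row (NK 0 k)" "c < dim_col (NK 0 k)"
  then have i: "i < q" and "c < nu * r" by (simp_all add: NK_def Krows_0)
  then obtain l t where l: "l < nu" and t: "t < r" and c: "c = l * r + t" by (elim block_indexE)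
  show "N k $$ (i, c) = NK 0 k $$ (i, c)"
  proof (cases "l < q")
    case True
    then show ?thesis using NK_index_top[OF i True, of t 0 k] Nblk_index[OF i l t] c t by simp
  next
    case False
    then have c': "c = q * (r - 0) + ((l - q) * r + t)" and m: "l - q < nu - q"
      using c l by (simp_all add: add_mult_distrib[symmetric])
    have "NK 0 k $$ (i, c) = of_nat ((k + l) choose l) * dpow z (k + l) (i + t)"
      unfolding c' NK_index_bottom[OF i m t] using False by simp
    then show ?thesis using Nblk_index[OF i l t] c by simp
  qed
qed (simp_all add: NK_def Nblk_def Krows_0)

lemma NK_mult_Kbar_index_top:
  assumes j: "j + 2 \<le> r" "j \<le> k" and i: "i < q" and l': "l' < q" and s: "s < r - Suc j"
  shows "(NK j k * K j) $$ (i, l' * (r - Suc j) + s) =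
    (if k = j then 0 else NK (Suc j) k $$ (i, l' * (r - Suc j) + s))"
proof -
  define n where "n = k - j"
  have s': "s < r - j" "Suc s < r - j" using s by linarith+
  have "(NK j k * K j) $$ (i, l' * (r - Suc j) + s) =
      of_nat ((n + l') choose l') * dpow z (n + l') (i + s) * (- z)
      + of_nat ((n + l') choose l') * dpow z (n + l') (Suc (i + s))
      - (if 0 < l' then of_nat ((n + (l' - 1)) choose (l' - 1)) * dpow z (n + (l' - 1)) (i + s) else 0)"
    using mult_Kbar_index_top[OF j(1) NK_carrier i l' s] NK_index_top[OF i _ s'(1), of "l' - 1"]
      NK_index_top[OF i l' s'(1)] NK_index_top[OF i l' s'(2)] l'
    by (simp add: n_def)
  also have "\<dots> = (if n = 0 then 0 else of_nat ((n - 1 + l') choose l') * dpow z (n - 1 + l') (i + s))"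
    by (rule binomial_dpow_recurrence)
  finally show ?thesis using NK_index_top[OF i l' s] j(2) by (simp add: n_def)
qed

lemma sum_NK_top_dpow:
  assumes "j \<le> k" "i < q" "s < r"
  shows "(\<Sum>t<s. NK j k $$ (i, (q - 1) * (r - j) + t) * dpow z j (s - t - 1)) =
    of_nat ((k - j + (q - 1)) choose (q - 1)) * dpow z (k + q) (i + s)"
proof -
  have "(\<Sum>t<s. NK j k $$ (i, (q - 1) * (r - j) + t) * dpow z j (s - t - 1)) =
      of_nat ((k - j + (q - 1)) choose (q - 1)) * (\<Sum>t<s. dpow z (k - j + (q - 1)) (i + t) * dpow z j (s - t - 1))"
    unfolding sum_distrib_left
  proof (intro sum.cong refl)
    fix t assume "t \<in> {..<s}"
    then show "NK j k $$ (i, (q - 1) * (r - j) + t) * dpow z j (s - t - 1) =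
        of_nat ((k - j + (q - 1)) choose (q - 1)) * (dpow z (k - j + (q - 1)) (i + t) * dpow z j (s - t - 1))"
      using NK_index_top[OF assms(2), of "q - 1" t j k] q_pos assms(3)
      by (cases "t < r - j") (auto simp: dpow_eq_0)
  qed
  also have "(\<Sum>t<s. dpow z (k - j + (q - 1)) (i + t) * dpow z j (s - t - 1)) = dpow z (k + q) (i + s)"
    using dpow_convolution[of i "k - j + (q - 1)" z j s] assms q_pos by simp
  finally show ?thesis .
qed

lemma sum_NK_bottom_power:
  assumes "i < q" "m < nu - q" "s < r"
  shows "(\<Sum>t<s. NK j k $$ (i, q * (r - j) + (m * r + t)) * z ^ (s - t - 1)) =
    of_nat ((k - j + (q + m)) choose (q + m)) * dpow z (k + (q + Suc m)) (i + s)"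
proof -
  have "(\<Sum>t<s. NK j k $$ (i, q * (r - j) + (m * r + t)) * z ^ (s - t - 1)) =
      of_nat ((k - j + (q + m)) choose (q + m)) * (\<Sum>t<s. dpow z (k + (q + m)) (i + t) * dpow z 0 (s - t - 1))"
    unfolding sum_distrib_left using NK_index_bottom[OF assms(1,2)] assms(3)
    by (intro sum.cong refl) (simp add: dpow_0)
  also have "(\<Sum>t<s. dpow z (k + (q + m)) (i + t) * dpow z 0 (s - t - 1)) = dpow z (k + (q + Suc m)) (i + s)"
    using dpow_convolution[of i "k + (q + m)" z 0 s] assms(1) by simp
  finally show ?thesis .
qed

lemma NK_mult_Kbar_index_bottom:
  assumes j: "j + 2 \<le> r" "j \<le> k" and i: "i < q" and m': "m' < nu - q" and s: "s < r"
  shows "(NK j k * K j) $$ (i, q * (r - Suc j) + (m' * r + s)) =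
    (if k = j then 0 else NK (Suc j) k $$ (i, q * (r - Suc j) + (m' * r + s)))"
proof -
  define c where "c L = (of_nat ((k - j + L) choose L) :: complex)" for L
  have "(NK j k * K j) $$ (i, q * (r - Suc j) + (m' * r + s)) =
      (c (q + m') - c (q + m' - 1)) * dpow z (k + (q + m')) (i + s)"
  proof (cases m')
    case 0
    then show ?thesis
      using mult_Kbar_index_bottom[OF j(1) q_pos NK_carrier i m' s] NK_index_bottom[OF i m' s]
        sum_NK_top_dpow[OF j(2) i s]
      by (simp add: c_def left_diff_distrib)
  next
    case (Suc m)
    then show ?thesis
      using mult_Kbar_index_bottom[OF j(1) q_pos NK_carrier i m' s] NK_index_bottom[OF i m' s]
        sum_NK_bottom_power[OF i _ s, of m] m'
      by (simp add: c_def left_diff_distrib distrib_right)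
  qed
  also have "c (q + m') - c (q + m' - 1) =
      (if k = j then 0 else of_nat ((k - j - 1 + (q + m')) choose (q + m')))"
    unfolding c_def using binomial_difference[of "q + m'" "k - j"] q_pos j(2) by simp
  finally show ?thesis using NK_index_bottom[OF i m' s] j(2) by simp
qed

lemma NK_mult_Kbar:
  assumes "j + 2 \<le> r" "j \<le> k"
  shows "NK j k * K j = (if k = j then 0\<^sub>m q (Krows (Suc j)) else NK (Suc j) k)"
proof (rule eq_matI)
  fix i c assume "i < dim_row (if k = j then 0\<^sub>m q (Krows (Suc j)) else NK (Suc j) k)"
    "c < dim_col (if k = j then 0\<^sub>m q (Krows (Suc j)) else NK (Suc j) k)"
  then have i: "i < q" and c: "c < q * (r - Suc j) + (nu - q) * r"
    by (cases "k = j"; simp add: NK_def Krows_def)+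
  from c show "(NK j k * K j) $$ (i, c) = (if k = j then 0\<^sub>m q (Krows (Suc j)) else NK (Suc j) k) $$ (i, c)"
  proof (cases rule: two_block_indexE)
    case (first l' s)
    then show ?thesis using NK_mult_Kbar_index_top[OF assms i first(1,2)] i block_index_less[OF first(1,2)]
      by (simp add: NK_def Krows_def)
  next
    case (second m' s)
    then show ?thesis using NK_mult_Kbar_index_bottom[OF assms i second(1,2)] i block_index_less[OF second(1,2)]
      by (simp add: NK_def Krows_def)
  qed
qed (use carrier_matD[OF Kbar_carrier[OF r_pos, of j]] in \<open>simp_all add: NK_def\<close>)

lemma NK_mult_Kbar_last:
  assumes j: "Suc j = r" and "j \<le> k"
  shows "NK j k * K j = 0\<^sub>m q (Krows r)"
proof (rule eq_matI)
  have rj: "r - j = 1" using j by simp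
  fix i c assume "i < dim_row (0\<^sub>m q (Krows r))" "c < dim_col (0\<^sub>m q (Krows r))"
  then have i: "i < q" and c: "c < Krows (Suc j)" and c': "c < (nu - q) * r"
    using j by (simp_all add: Krows_def)
  have top: "K j $$ (l, c) = 0" if "l < q" for l
    using that c' Kbot_carrier[of q r nu z] by (simp add: Kbar_last[OF j])
  have bottom: "NK j k $$ (i, q + (m * r + t)) = 0" if "m < nu - q" "t < r" for m t
    using NK_index_bottom[OF i that, of j k] assms i that rj by (simp add: dpow_eq_0)
  show "(NK j k * K j) $$ (i, c) = 0\<^sub>m q (Krows r) $$ (i, c)"
    using mult_Kbar_index[OF r_pos NK_carrier i c] i c c' rj j by (simp add: top bottom)
qed (use Kbar_carrier[OF r_pos, of j] j in \<open>simp_all add: NK_def\<close>)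

definition Kpref :: "nat \<Rightarrow> complex mat" where
  "Kpref j = (if j = 0 then 1\<^sub>m (Krows 0) else Kprod q r nu (j - 1) z)"

lemma Kpref_Suc: "Kpref (Suc j) = Kprod q r nu j z"
  by (simp add: Kpref_def)

lemma Kpref_carrier: "Kpref j \<in> carrier_mat (Krows 0) (Krows j)"
proof (induction j)
  case (Suc j)
  then show ?case using Kbar_carrier[OF r_pos] by (cases j) (simp_all add: Kpref_def)
qed (simp add: Kpref_def)

lemma Kpref_Suc_eq_mult: "Kpref (Suc j) = Kpref j * K j"
  using Kbar_carrier[OF r_pos, of 0] by (cases j) (simp_all add: Kpref_def)

lemma Nblk_mult_Kpref_Suc: "N k * Kpref (Suc j) = (N k * Kpref j) * K j"
  unfolding Kpref_Suc_eq_mult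
  using Nblk_carrier[of q r nu k z] Kpref_carrier Kbar_carrier[OF r_pos] Krows_0
  by (simp add: assoc_mult_mat[of _ q "Krows 0" _ "Krows j" _ "Krows (Suc j)"])

lemma Nblk_mult_Kpref: "j \<le> k \<Longrightarrow> j \<le> r - 1 \<Longrightarrow> N k * Kpref j = NK j k"
proof (induction j)
  case 0
  then show ?case using Nblk_carrier[of q r nu k z] Krows_0 by (simp add: Kpref_def Nblk_eq_NK_0)
next
  case (Suc j)
  then show ?case using NK_mult_Kbar[of j k] by (simp add: Nblk_mult_Kpref_Suc)
qed

lemma Nblk_mult_Kpref_eq_0: "k < j \<Longrightarrow> N k * Kpref j = 0\<^sub>m q (Krows j)"
proof -
  define j0 where "j0 = min k (r - 1)"
  have "N k * Kpref (Suc j0) = NK j0 k * K j0"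
    by (simp add: Nblk_mult_Kpref_Suc Nblk_mult_Kpref j0_def)
  also have "\<dots> = 0\<^sub>m q (Krows (Suc j0))"
  proof (cases "k + 2 \<le> r")
    case True
    then show ?thesis using NK_mult_Kbar[of k k] by (simp add: j0_def)
  next
    case False
    then have "Suc j0 = r" "j0 \<le> k" using r_pos by (simp_all add: j0_def)
    then show ?thesis using NK_mult_Kbar_last by simp
  qed
  finally have base: "N k * Kpref (Suc j0) = 0\<^sub>m q (Krows (Suc j0))" .
  assume "k < j"
  then have "Suc j0 \<le> j" by (simp add: j0_def)
  then show ?thesis
  proof (induction j rule: dec_induct)
    case (step j)
    then show ?case using Kbar_carrier[OF r_pos, of j] by (simp add: Nblk_mult_Kpref_Suc)
  qed (rule base)
qed

lemma Kbar_inj: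
  assumes v: "v \<in> carrier_vec (Krows (Suc j))" and Kv: "K j *\<^sub>v v = 0\<^sub>v (Krows j)"
  shows "v = 0\<^sub>v (Krows (Suc j))"
proof -
  consider "j + 2 \<le> r" | "Suc j = r" | "r \<le> j" by linarith
  then show ?thesis
  proof cases
    case 1
    have "v = 0\<^sub>v (q * (r - Suc j) + (nu - q) * r)"
      by (rule four_block_mat_mult_vec_eq_0_upper[OF Ktop_left_carrier Ktop_right_carrier Kbot_carrier Ktop_left_inj[OF 1] Kbot_inj])
        (use v Kv in \<open>simp_all add: Kbar_split[OF 1] Krows_def\<close>)
    then show ?thesis by (simp add: Krows_def)
  next
    case 2
    then have rj: "r - j = 1" by simp
    have "v = 0\<^sub>v (0 + (nu - q) * r)"
    proof (rule four_block_mat_mult_vec_eq_0_upper[OF zero_carrier_mat[of q 0] zero_carrier_mat Kbot_carrier _ Kbot_inj])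
      show "a = 0\<^sub>v 0" if "a \<in> carrier_vec 0" for a :: "complex vec"
        using that by (intro eq_vecI) auto
    qed (use v Kv 2 in \<open>simp_all add: Kbar_last Krows_def rj\<close>)
    then show ?thesis using 2 by (simp add: Krows_def)
  next
    case 3
    then show ?thesis using Kbot_inj v Kv r_pos by (simp add: Kbar_beyond Krows_def)
  qed
qed

lemma Kpref_inj: "v \<in> carrier_vec (Krows j) \<Longrightarrow> Kpref j *\<^sub>v v = 0\<^sub>v (Krows 0) \<Longrightarrow> v = 0\<^sub>v (Krows j)"
proof (induction j arbitrary: v)
  case 0
  then show ?case by (simp add: Kpref_def)
next
  case (Suc j)
  have Kv: "K j *\<^sub>v v \<in> carrier_vec (Krows j)"
    by (rule mult_mat_vec_carrier[OF Kbar_carrier[OF r_pos] Suc.prems(1)])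
  have "Kpref j *\<^sub>v (K j *\<^sub>v v) = 0\<^sub>v (Krows 0)"
    using Suc.prems assoc_mult_mat_vec[OF Kpref_carrier Kbar_carrier[OF r_pos] Suc.prems(1)]
    by (simp add: Kpref_Suc_eq_mult)
  then show ?case using Suc.IH[OF Kv] Kbar_inj[OF Suc.prems(1)] by simp
qed

lemma rank_Kpref: "vec_space.rank (Krows 0) (Kpref j) = Krows j"
  by (rule rank_eq_dim_col_if_inj[OF Kpref_carrier Kpref_inj])

definition Ksel :: "nat \<Rightarrow> complex mat" where
  "Ksel m = mat (Krows 0) (m * q) (\<lambda>(x, c). Kpref (c div q) $$ (x, (c mod q) * (r - c div q)))"

lemma Nmat_mult_Ksel_index:
  assumes "m \<le> r" "k < mu" "i < q" "j < m" "l < q"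
  shows "(Nmat q r mu nu z * Ksel m) $$ (k * q + i, j * q + l) =
    (if k < j then 0 else of_nat ((k - j + l) choose l) * dpow z (k - j + l) i)"
proof -
  have c: "j * q + l < m * q" using block_index_less[OF assms(4,5)] .
  have "0 < r - j" using assms by linarith
  then have "l * (r - j) < q * (r - j)" using assms(5) block_index_less[of l q 0 "r - j"] by simp
  then have c': "l * (r - j) < Krows j" by (simp add: Krows_def trans_less_add1)
  have "col (Ksel m) (j * q + l) = col (Kpref j) (l * (r - j))"
    using c c' Kpref_carrier[of j] assms(5) by (intro eq_vecI) (simp_all add: Ksel_def)
  then have "(Nmat q r mu nu z * Ksel m) $$ (k * q + i, j * q + l) = (N k * Kpref j) $$ (i, l * (r - j))"
    using Nmat_mult_index[of "Ksel m" nu r "m * q" k mu i q "j * q + l"] assms c c' Kpref_carrier[of j]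
    by (simp add: Ksel_def Krows_0 Nblk_def)
  also have "\<dots> = (if k < j then 0 else of_nat ((k - j + l) choose l) * dpow z (k - j + l) i)"
  proof (cases "k < j")
    case True
    then show ?thesis using Nblk_mult_Kpref_eq_0 c' assms(3) by simp
  next
    case False
    then show ?thesis using Nblk_mult_Kpref[of j k] NK_index_top[OF assms(3,5), of 0 j k] assms by simp
  qed
  finally show ?thesis .
qed

lemma rank_Nmat_ge: "q * min mu r \<le> vec_space.rank (mu * q) (Nmat q r mu nu z)"
proof -
  define m where "m = min mu r"
  let ?NK = "Nmat q r mu nu z * Ksel m"
  have Ksel: "Ksel m \<in> carrier_mat (nu * r) (m * q)" by (simp add: Ksel_def Krows_0)
  have NK: "?NK \<in> carrier_mat (mu * q) (m * q)" by (rule mult_carrier_mat[OF Nmat_carrier Ksel])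
  have "v = 0\<^sub>v (m * q)" if v: "v \<in> carrier_vec (m * q)" and NKv: "?NK *\<^sub>v v = 0\<^sub>v (mu * q)" for v
  proof (rule mult_mat_vec_eq_0_triangular[OF NK v NKv wf_less, where rho = "\<lambda>c. c"])
    fix c assume c: "c < m * q"
    then show "c < mu * q" by (simp add: m_def) (meson le_less_trans min.cobounded1 mult_le_mono1 not_le)
    from c obtain j l where jl: "j < m" "l < q" and c_eq: "c = j * q + l" by (elim block_indexE)
    have m: "m \<le> r" "j < mu" using jl by (simp_all add: m_def)
    show "?NK $$ (c, c) \<noteq> 0" unfolding c_eq Nmat_mult_Ksel_index[OF m jl(2) jl] by simp
    fix c' assume c': "c' < m * q" "c' \<noteq> c" "(c', c) \<notin> {(x, y). x < y}"
    then have "c < c'" by simp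
    from c'(1) obtain j' l' where jl': "j' < m" "l' < q" and c'_eq: "c' = j' * q + l'" by (elim block_indexE)
    have "j < j' \<or> (j = j' \<and> l < l')"
      using block_index_less_lex[OF jl'(2) jl(2)] \<open>c < c'\<close> c_eq c'_eq by simp
    then show "?NK $$ (c, c') = 0"
      unfolding c_eq c'_eq Nmat_mult_Ksel_index[OF m jl(2) jl'] by (auto simp: dpow_eq_0)
  qed
  then have "vec_space.rank (mu * q) ?NK = m * q" by (rule rank_eq_dim_col_if_inj[OF NK])
  moreover have "vec_space.rank (mu * q) ?NK \<le> vec_space.rank (mu * q) (Nmat q r mu nu z)"
    by (rule rank_mult_le[OF Nmat_carrier Ksel])
  ultimately show ?thesis by (simp add: m_def mult.commute)
qed

lemma Nmat_mult_Kpref: "0 < mu \<Longrightarrow> Nmat q r mu nu z * Kpref mu = 0\<^sub>m (mu * q) (Krows mu)"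
proof (rule eq_matI)
  fix p c assume "0 < mu" "p < dim_row (0\<^sub>m (mu * q) (Krows mu))" "c < dim_col (0\<^sub>m (mu * q) (Krows mu))"
  then have "p < mu * q" and c: "c < Krows mu" by simp_all
  then obtain k i where ki: "k < mu" "i < q" and p: "p = k * q + i" by (elim block_indexE)
  have "(Nmat q r mu nu z * Kpref mu) $$ (p, c) = (N k * Kpref mu) $$ (i, c)"
    using Nmat_mult_index[OF _ ki c] Kpref_carrier[of mu] Krows_0 p by simp
  then show "(Nmat q r mu nu z * Kpref mu) $$ (p, c) = 0\<^sub>m (mu * q) (Krows mu) $$ (p, c)"
    using Nblk_mult_Kpref_eq_0[OF ki(1)] ki c p block_index_less[OF ki] by simp
qed (use carrier_matD[OF Kpref_carrier] in \<open>simp_all add: Nmat_def\<close>)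

lemma Krows_add_q_min: "Krows mu + q * min mu r = nu * r"
proof -
  have "r - mu = r - min mu r" by (simp add: min_def)
  moreover have "q * (r - min mu r) + q * min mu r = q * r"
    by (simp flip: add_mult_distrib2)
  moreover have "q * r + (nu - q) * r = nu * r"
    using q_less_nu by (simp flip: add_mult_distrib)
  ultimately show ?thesis by (simp add: Krows_def)
qed

lemma Nmat_kernel:
  assumes "0 < mu"
  shows "mat_kernel (Nmat q r mu nu z) = module.span class_ring (module_vec TYPE(complex) (nu * r)) (set (cols (Kpref mu)))"
    and "kernel_dim (Nmat q r mu nu z) = Krows mu"
    and "vec_space.rank (mu * q) (Nmat q r mu nu z) = q * min mu r"
proof -
  have K: "Kpref mu \<in> carrier_mat (nu * r) (Krows mu)" using Kpref_carrier Krows_0 by simp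
  have rank_K: "vec_space.rank (nu * r) (Kpref mu) = Krows mu" using rank_Kpref Krows_0 by simp
  have nullity: "vec_space.rank (mu * q) (Nmat q r mu nu z) + kernel_dim (Nmat q r mu nu z) = nu * r"
    by (rule rank_plus_kernel_dim[OF Nmat_carrier])
  then have "kernel_dim (Nmat q r mu nu z) \<le> vec_space.rank (nu * r) (Kpref mu)"
    using rank_Nmat_ge[of mu] rank_K Krows_add_q_min[of mu] by linarith
  note kernel = mat_kernel_eq_span_cols[OF Nmat_carrier K Nmat_mult_Kpref[OF assms] this]
  show "mat_kernel (Nmat q r mu nu z) = module.span class_ring (module_vec TYPE(complex) (nu * r)) (set (cols (Kpref mu)))"
    by (rule kernel(1))
  show "kernel_dim (Nmat q r mu nu z) = Krows mu" using kernel(2) rank_K by simp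
  then show "vec_space.rank (mu * q) (Nmat q r mu nu z) = q * min mu r"
    using nullity Krows_add_q_min[of mu] by linarith
qed

end

theorem theorem5p8:
  fixes q r mu nu :: nat and z :: complex
  assumes "q > 0" and "r > 0" and "mu > 0" and "nu > 0"
    and "q + 1 \<le> nu" and "nu \<le> q + r - 1"
  shows "(\<forall>i k. k \<le> i \<longrightarrow>
            Nblk q r nu k z * Kprod q r nu i z = 0\<^sub>m q (dim_col (Kprod q r nu i z)))
       \<and> (mu \<le> r - 1 \<longrightarrow>
            Kprod q r nu (mu - 1) z \<in> carrier_mat (nu * r) (nu * r - q * mu)
          \<and> vec_space.rank (nu * r) (Kprod q r nu (mu - 1) z) = nu * r - q * mu)
       \<and> (r \<le> mu \<longrightarrow>
            Kprod q r nu (mu - 1) z \<in> carrier_mat (nu * r) ((nu - q) * r)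
          \<and> vec_space.rank (nu * r) (Kprod q r nu (mu - 1) z) = (nu - q) * r)
       \<and> kernel_dim (Nmat q r mu nu z) = nu * r - q * min mu r
       \<and> mat_kernel (Nmat q r mu nu z) =
            module.span class_ring (module_vec TYPE(complex) (nu * r))
              (set (cols (Kprod q r nu (mu - 1) z)))
       \<and> vec_space.rank (mu * q) (Nmat q r mu nu z) = q * min mu r
       \<and> q * min mu r < nu * r"
proof -
  interpret Kbar_setting q r nu z
    using assms by unfold_locales auto
  have Kprod_mu: "Kprod q r nu (mu - 1) z = Kpref mu"
    using assms(3) Kpref_Suc[of "mu - 1"] by simp
  have Krows_mu: "Krows mu = nu * r - q * min mu r"
    using Krows_add_q_min[of mu] by simp
  have "Nblk q r nu k z * Kprod q r nu i z = 0\<^sub>m q (dim_col (Kprod q r nu i z))" if "k \<le> i" for i k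
    using Nblk_mult_Kpref_eq_0[of k "Suc i"] that carrier_matD(2)[OF Kpref_carrier[of "Suc i"]]
    by (simp add: Kpref_Suc)
  moreover have "Kpref mu \<in> carrier_mat (nu * r) (Krows mu)" "vec_space.rank (nu * r) (Kpref mu) = Krows mu"
    using Kpref_carrier rank_Kpref Krows_0 by simp_all
  moreover have "q * min mu r < nu * r"
  proof -
    have "q * min mu r \<le> q * r" by simp
    also have "\<dots> < nu * r" using assms(5) \<open>r > 0\<close> by simp
    finally show ?thesis .
  qed
  ultimately show ?thesis
    unfolding Kprod_mu using Nmat_kernel[OF assms(3)] Krows_mu by (auto simp: min_def Krows_def)
qed

end
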